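(* Let $G$ be a finite cyclic group (written additively) and let $\mathcal A=\mathcal O(K,G)$ be an orbit S-ring over $G$ for some subgroup $K\le\mathrm{Aut}(G)$. Suppose there is a basic set $X$ of $\mathcal A$ such that $X^{(-1)}\subseteq X+X$ and $X$ generates $G$. Then there exists an integer $b$ such that $Y^{(b)}=Y^{(-b-1)}=Y$ for every basic set $Y$ of $\mathcal A$. In particular, $Y^{(-1)}\subseteq Y+Y$ for every basic set $Y$.
   Context: An S-ring over a finite group $G$ is a subring $\mathcal A$ of the group ring $\mathbb{Z}[G]$ having a $\mathbb{Z}$-basis $\{\underline X:X\in\mathcal S\}$ for a partition $\mathcal S$ of $G$ with $\{0\}\in\mathcal S$ and $X^{(-1)}\in\mathcal S$ for all $X\in\mathcal S$, where $\underline X=\sum_{x\in X}x$; elements of $\mathcal S$ are basic sets. For $K\le\mathrm{Aut}(G)$, $\mathcal O(K,G)$ is the S-ring whose basic sets are the orbits of $K$ on $G$. For $X\subseteq G$ and an integer $m$, $X^{(m)}=\{mx:x\in X\}$, and $X+X=\{x+x':x,x'\in X\}$. *)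

theory Defs
  imports "HOL-Algebra.Elementary_Groups" "HOL-Algebra.Bij"
begin

text \<open>Group G written multiplicatively (HOL-Algebra); additive notation of the paper
  corresponds: x + y = x \<otimes> y, m x = x [^] m.\<close>

definition orbitK :: "('a \<Rightarrow> 'a) set \<Rightarrow> 'a \<Rightarrow> 'a set" where
  "orbitK K x = {\<sigma> x | \<sigma>. \<sigma> \<in> K}"

definition orbit_basic_sets :: "('a, 'b) monoid_scheme \<Rightarrow> ('a \<Rightarrow> 'a) set \<Rightarrow> 'a set set" where
  "orbit_basic_sets G K = orbitK K ` carrier G"

definition set_pow :: "('a, 'b) monoid_scheme \<Rightarrow> 'a set \<Rightarrow> int \<Rightarrow> 'a set" where
  "set_pow G X m = (\<lambda>x. x [^]\<^bsub>G\<^esub> m) ` X"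

definition set_sum :: "('a, 'b) monoid_scheme \<Rightarrow> 'a set \<Rightarrow> 'a set \<Rightarrow> 'a set" where
  "set_sum G X Y = {x \<otimes>\<^bsub>G\<^esub> y | x y. x \<in> X \<and> y \<in> Y}"

end

theory Submission
  imports Defs
begin

text \<open>Let \<open>X\<close> be the \<open>K\<close>-orbit of \<open>x\<close>. Since \<open>x\<^sup>-\<^sup>1 \<in> X \<otimes> X\<close>, there are
  \<open>\<sigma>, \<tau> \<in> K\<close> with \<open>x\<^sup>-\<^sup>1 = \<sigma> x \<otimes> \<tau> x\<close>. On a cyclic group every endomorphism is a
  power map, say \<open>\<sigma> z = z\<^sup>a\<close> and \<open>\<tau> z = z\<^sup>c\<close>, so \<open>x\<^sup>a\<^sup>+\<^sup>c\<^sup>+\<^sup>1 = \<one>\<close>. Automorphisms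
  preserve this relation, so it holds on \<open>X\<close> and hence on the group \<open>X\<close> generates,
  which is all of \<open>G\<close>: thus also \<open>\<tau> z = z\<^sup>-\<^sup>a\<^sup>-\<^sup>1\<close>. As \<open>\<sigma>\<close> and \<open>\<tau>\<close> map every
  \<open>K\<close>-orbit onto itself, \<open>b = a\<close> works, and \<open>y\<^sup>-\<^sup>1 = y\<^sup>b \<otimes> y\<^sup>-\<^sup>b\<^sup>-\<^sup>1\<close> gives the last
  claim.\<close>

lemma AutoGroup_mult_apply:
  assumes "\<sigma> \<in> auto G" "\<rho> \<in> auto G" "y \<in> carrier G"
  shows "(\<sigma> \<otimes>\<^bsub>AutoGroup G\<^esub> \<rho>) y = \<sigma> (\<rho> y)"
  using assms by (simp add: AutoGroup_def BijGroup_def compose_def auto_def)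

lemma AutoGroup_one_apply: "y \<in> carrier G \<Longrightarrow> \<one>\<^bsub>AutoGroup G\<^esub> y = y"
  by (simp add: AutoGroup_def BijGroup_def)

lemma subgroup_AutoGroup_subset_auto: "subgroup K (AutoGroup G) \<Longrightarrow> K \<subseteq> auto G"
  using subgroup.subset by (fastforce simp: AutoGroup_def)

lemma subgroup_AutoGroup_subset_hom: "subgroup K (AutoGroup G) \<Longrightarrow> K \<subseteq> hom G G"
  using subgroup_AutoGroup_subset_auto by (fastforce simp: auto_def)

lemma orbitK_subset_carrier:
  assumes "subgroup K (AutoGroup G)" "y \<in> carrier G"
  shows "orbitK K y \<subseteq> carrier G"
  using assms subgroup_AutoGroup_subset_hom by (fastforce simp: orbitK_def hom_def)

lemma orbitK_self:
  assumes "subgroup K (AutoGroup G)" "y \<in> carrier G"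
  shows "y \<in> orbitK K y"
  using subgroup.one_closed[OF assms(1)] AutoGroup_one_apply[OF assms(2)]
  unfolding orbitK_def by (metis (mono_tags) mem_Collect_eq)

lemma image_orbitK_subset:
  assumes "subgroup K (AutoGroup G)" "\<sigma> \<in> K" "y \<in> carrier G"
  shows "\<sigma> ` orbitK K y \<subseteq> orbitK K y"
proof
  fix z assume "z \<in> \<sigma> ` orbitK K y"
  then obtain \<rho> where "\<rho> \<in> K" and z: "z = \<sigma> (\<rho> y)"
    by (auto simp: orbitK_def)
  then have "z = (\<sigma> \<otimes>\<^bsub>AutoGroup G\<^esub> \<rho>) y"
    using assms subgroup_AutoGroup_subset_auto AutoGroup_mult_apply by (metis subsetD)
  moreover have "\<sigma> \<otimes>\<^bsub>AutoGroup G\<^esub> \<rho> \<in> K"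
    using \<open>\<rho> \<in> K\<close> assms(2) subgroup.m_closed[OF assms(1)] by blast
  ultimately show "z \<in> orbitK K y"
    by (auto simp: orbitK_def)
qed

lemma (in group) image_orbitK:
  assumes K: "subgroup K (AutoGroup G)" and "\<sigma> \<in> K" "y \<in> carrier G"
  shows "\<sigma> ` orbitK K y = orbitK K y"
proof
  show "\<sigma> ` orbitK K y \<subseteq> orbitK K y"
    using image_orbitK_subset[OF assms] .
next
  interpret A: group "AutoGroup G"
    by (rule AutoGroup)
  define \<sigma>' where "\<sigma>' = inv\<^bsub>AutoGroup G\<^esub> \<sigma>"
  have "\<sigma>' \<in> K"
    unfolding \<sigma>'_def using assms(2) subgroup.m_inv_closed[OF K] by blast
  have \<sigma>_carrier: "\<sigma> \<in> carrier (AutoGroup G)"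
    using assms(2) subgroup.subset[OF K] by blast
  have inverse: "\<sigma> (\<sigma>' z) = z" if "z \<in> orbitK K y" for z
  proof -
    have z: "z \<in> carrier G"
      using that orbitK_subset_carrier[OF K assms(3)] by blast
    have "\<sigma> (\<sigma>' z) = (\<sigma> \<otimes>\<^bsub>AutoGroup G\<^esub> \<sigma>') z"
      using z assms(2) \<open>\<sigma>' \<in> K\<close> subgroup_AutoGroup_subset_auto[OF K] AutoGroup_mult_apply
      by (metis subsetD)
    also have "\<dots> = \<one>\<^bsub>AutoGroup G\<^esub> z"
      unfolding \<sigma>'_def using \<sigma>_carrier by simp
    also have "\<dots> = z"
      using z by (rule AutoGroup_one_apply)
    finally show ?thesis .
  qed
  show "orbitK K y \<subseteq> \<sigma> ` orbitK K y"
  proof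
    fix z assume z: "z \<in> orbitK K y"
    then have "\<sigma>' z \<in> orbitK K y"
      using image_orbitK_subset[OF K \<open>\<sigma>' \<in> K\<close> assms(3)] by blast
    then show "z \<in> \<sigma> ` orbitK K y"
      using inverse[OF z] by (rule rev_image_eqI[OF _ sym])
  qed
qed

lemma (in group) set_pow_orbitK:
  assumes "subgroup K (AutoGroup G)" "\<sigma> \<in> K" "y \<in> carrier G"
    and "\<forall>z \<in> carrier G. \<sigma> z = z [^] a"
  shows "set_pow G (orbitK K y) a = orbitK K y"
proof -
  have "set_pow G (orbitK K y) a = \<sigma> ` orbitK K y"
    unfolding set_pow_def using assms(4) orbitK_subset_carrier[OF assms(1,3)]
    by (intro image_cong) auto
  with image_orbitK[OF assms(1-3)] show ?thesis
    by simp
qed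

lemma (in group) cyclic_group_hom_eq_int_pow:
  assumes "cyclic_group G" "\<sigma> \<in> hom G G"
  shows "\<exists>a::int. \<forall>z \<in> carrier G. \<sigma> z = z [^] a"
proof -
  obtain g where g: "g \<in> carrier G" "carrier G = range (\<lambda>n::int. g [^] n)"
    using assms(1) cyclic_group by blast
  have "\<sigma> g \<in> carrier G"
    using assms(2) g(1) by (auto simp: hom_def)
  then obtain a :: int where a: "\<sigma> g = g [^] a"
    using g(2) by auto
  have "\<sigma> (g [^] k) = (g [^] k) [^] a" for k :: int
  proof -
    have "\<sigma> (g [^] k) = (g [^] a) [^] k"
      using hom_int_pow[OF assms(2) g(1) is_group is_group] a by simp
    also have "\<dots> = (g [^] k) [^] a"
      using g(1) by (simp add: int_pow_pow mult.commute)
    finally show ?thesis .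
  qed
  then show ?thesis
    using g(2) by auto
qed

lemma (in comm_group) subgroup_int_pow_eq_one:
  "subgroup {z \<in> carrier G. z [^] (m::int) = \<one>} G"
  by (rule subgroupI) (auto simp: int_pow_inv int_pow_distrib)

lemma (in comm_group) generate_int_pow_eq_one:
  assumes "\<forall>x \<in> X. x [^] (m::int) = \<one>" "X \<subseteq> carrier G" "z \<in> generate G X"
  shows "z [^] m = \<one>"
  using generate_subgroup_incl[OF _ subgroup_int_pow_eq_one, of X m] assms by blast

lemma (in group) orbitK_int_pow_eq_one:
  assumes "subgroup K (AutoGroup G)" "x \<in> carrier G" "x [^] (m::int) = \<one>"
    and "z \<in> orbitK K x"
  shows "z [^] m = \<one>"
proof -
  obtain \<rho> where "\<rho> \<in> K" and z: "z = \<rho> x"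
    using assms(4) by (auto simp: orbitK_def)
  then have \<rho>: "\<rho> \<in> hom G G"
    using subgroup_AutoGroup_subset_hom[OF assms(1)] by blast
  have "z [^] m = \<rho> (x [^] m)"
    using z hom_int_pow[OF \<rho> assms(2) is_group is_group] by simp
  also have "\<dots> = \<one>"
    using assms(3) hom_one[OF \<rho> is_group is_group] by simp
  finally show ?thesis .
qed

lemma (in group) set_pow_inv_subset_set_sum:
  assumes "Y \<subseteq> carrier G" "set_pow G Y b \<subseteq> Y" "set_pow G Y (- b - 1) \<subseteq> Y"
  shows "set_pow G Y (-1) \<subseteq> set_sum G Y Y"
proof
  fix w assume "w \<in> set_pow G Y (-1)"
  then obtain y where "y \<in> Y" and w: "w = y [^] (-1::int)"
    by (auto simp: set_pow_def)
  then have "w = y [^] b \<otimes> y [^] (- b - 1)"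
    using assms(1) by (auto simp flip: int_pow_mult)
  moreover have "y [^] b \<in> Y" "y [^] (- b - 1) \<in> Y"
    using \<open>y \<in> Y\<close> assms(2,3) by (auto simp: set_pow_def)
  ultimately show "w \<in> set_sum G Y Y"
    by (auto simp: set_sum_def)
qed

lemma (in group) cyclic_orbit_inverse_split_exponents:
  assumes "cyclic_group G" and K: "subgroup K (AutoGroup G)" and "\<sigma> \<in> K" "\<tau> \<in> K"
    and x: "x \<in> carrier G" and gen: "generate G (orbitK K x) = carrier G"
    and inv_split: "x [^] (-1::int) = \<sigma> x \<otimes> \<tau> x"
  shows "\<exists>a::int. (\<forall>z \<in> carrier G. \<sigma> z = z [^] a) \<and> (\<forall>z \<in> carrier G. \<tau> z = z [^] (- a - 1))"
proof -
  interpret comm_group G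
    using assms(1) cyclic_imp_abelian_group by blast
  obtain a c :: int where a: "\<forall>z \<in> carrier G. \<sigma> z = z [^] a"
    and c: "\<forall>z \<in> carrier G. \<tau> z = z [^] c"
    using cyclic_group_hom_eq_int_pow[OF assms(1)] assms(3,4) subgroup_AutoGroup_subset_hom[OF K]
    by blast
  have "x [^] (a + c + 1) = \<sigma> x \<otimes> \<tau> x \<otimes> x [^] (1::int)"
    using a c x by (simp only: int_pow_mult int_pow_closed)
  also have "\<dots> = x [^] (-1::int) \<otimes> x"
    using x by (simp only: inv_split int_pow_1)
  also have "\<dots> = \<one>"
    using x by (simp add: int_pow_neg)
  finally have "x [^] (a + c + 1) = \<one>" .
  then have "\<forall>z \<in> orbitK K x. z [^] (a + c + 1) = \<one>"
    using orbitK_int_pow_eq_one[OF K x] by blast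
  then have exponent: "z [^] (a + c + 1) = \<one>" if "z \<in> carrier G" for z
    using generate_int_pow_eq_one[OF _ orbitK_subset_carrier[OF K x]] that gen by blast
  have "\<forall>z \<in> carrier G. \<tau> z = z [^] (- a - 1)"
  proof
    fix z assume z: "z \<in> carrier G"
    have "\<tau> z = z [^] ((- a - 1) + (a + c + 1))"
      using c z by simp
    also have "\<dots> = z [^] (- a - 1) \<otimes> z [^] (a + c + 1)"
      using z by (rule int_pow_mult)
    also have "\<dots> = z [^] (- a - 1)"
      using exponent[OF z] z by (metis int_pow_closed r_one)
    finally show "\<tau> z = z [^] (- a - 1)" .
  qed
  with a show ?thesis
    by blast
qed

theorem lemma4p6:
  fixes G :: "('a, 'b) monoid_scheme" and K :: "('a \<Rightarrow> 'a) set" and X :: "'a set"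
  assumes "group G" and "finite (carrier G)" and "cyclic_group G"
    and "subgroup K (AutoGroup G)"
    and "X \<in> orbit_basic_sets G K"
    and "set_pow G X (-1) \<subseteq> set_sum G X X"
    and "generate G X = carrier G"
  shows "(\<exists>b::int. \<forall>Y \<in> orbit_basic_sets G K.
            set_pow G Y b = Y \<and> set_pow G Y (- b - 1) = Y)
         \<and> (\<forall>Y \<in> orbit_basic_sets G K. set_pow G Y (-1) \<subseteq> set_sum G Y Y)"
proof -
  interpret group G by (rule assms(1))
  obtain x where x: "x \<in> carrier G" and X: "X = orbitK K x"
    using assms(5) by (auto simp: orbit_basic_sets_def)
  have "x [^]\<^bsub>G\<^esub> (-1::int) \<in> set_pow G X (-1)"
    unfolding set_pow_def X using orbitK_self[OF assms(4) x] by blast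
  then obtain \<sigma> \<tau> where \<sigma>: "\<sigma> \<in> K" and \<tau>: "\<tau> \<in> K" and "x [^]\<^bsub>G\<^esub> (-1::int) = \<sigma> x \<otimes>\<^bsub>G\<^esub> \<tau> x"
    using assms(6) unfolding X set_sum_def orbitK_def by blast
  then obtain a :: int where \<sigma>_pow: "\<forall>z \<in> carrier G. \<sigma> z = z [^]\<^bsub>G\<^esub> a"
    and \<tau>_pow: "\<forall>z \<in> carrier G. \<tau> z = z [^]\<^bsub>G\<^esub> (- a - 1)"
    using cyclic_orbit_inverse_split_exponents[OF assms(3,4) \<sigma> \<tau> x] assms(7) X by blast
  have fixed: "set_pow G Y a = Y \<and> set_pow G Y (- a - 1) = Y"
    if "Y \<in> orbit_basic_sets G K" for Y
    using that set_pow_orbitK[OF assms(4) \<sigma> _ \<sigma>_pow] set_pow_orbitK[OF assms(4) \<tau> _ \<tau>_pow]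
    unfolding orbit_basic_sets_def by blast
  moreover have "set_pow G Y (-1) \<subseteq> set_sum G Y Y" if "Y \<in> orbit_basic_sets G K" for Y
  proof -
    have "Y \<subseteq> carrier G"
      using that orbitK_subset_carrier[OF assms(4)] by (auto simp: orbit_basic_sets_def)
    with fixed[OF that] show ?thesis
      using set_pow_inv_subset_set_sum[of Y a] by simp
  qed
  ultimately show ?thesis
    by blast
qed

end
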